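(* Let $T$ be an operator function on an interval $\Delta$ satisfying (A1)–(A3) and (VM). Let $a>0$, $\mu_1,\mu_2\in\Delta$ with $\mu_1<\mu_2$, and let $\mathcal M$ be a subspace of $\mathcal D$. Suppose $\mu_2\in\sigma(T)$ and $\mathfrak t(\mu_2)[x]\ge a\|x\|^2$ for all $x\in\mathcal M$. Then there exists a subspace $\mathcal M'$ with $\mathcal M\subsetneq\mathcal M'\subset\mathcal D$ such that $\mathfrak t(\mu_1)[x]>0$ for all $x\in\mathcal M'\setminus\{0\}$.
   Context: "Subspace" means linear manifold, not necessarily closed. For a self-adjoint operator $A$ with spectral measure $E$, its form is $\mathfrak a[x,y]=\int_{\mathbb R}\mu\,d\langle E(\mu)x,y\rangle$ on $\mathrm{dom}(|A|^{1/2})$, $\mathfrak a[x]:=\mathfrak a[x,x]$. $\sigma(T)=\{\lambda\in\Delta:0\in\sigma(T(\lambda))\}$. (A1) $T(\lambda)$ self-adjoint for each $\lambda\in\Delta$, with form $\mathfrak t(\lambda)$; (A2) $\mathrm{dom}\,\mathfrak t(\lambda)=:\mathcal D$ independent of $\lambda$; (A3) for each $x\in\mathcal D\setminus\{0\}$, $\lambda\mapsto\mathfrak t(\lambda)[x]$ is continuous, and if $\mathfrak t(\lambda_0)[x]=0$ then $\mathfrak t(\lambda)[x]>0$ for $\lambda<\lambda_0$ and $<0$ for $\lambda>\lambda_0$ ($\lambda\in\Delta$). (VM): for every $u\in\mathcal D$, $\mathfrak t(\cdot)[u]$ is differentiable on $\Delta$ with derivative $\mathfrak t'(\cdot)[u]$,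 and for every compact subinterval $I\subset\Delta$ there are $\varepsilon,\delta>0$ with: $x\in\mathcal D$, $\|x\|=1$, $\lambda\in I$, $|\mathfrak t(\lambda)[x]|\le\varepsilon$ imply $\mathfrak t'(\lambda)[x]\le-\delta$. *)

theory Defs
  imports "HOL-Analysis.Analysis" "HOL-Probability.Probability"
begin

text \<open>A complex Hilbert space is encoded as a real Hilbert space (type class
  real_inner + complete_space, whose inner product is the real part of the complex
  one) together with a complex structure J (multiplication by the imaginary unit).\<close>

definition complex_structure :: "('h::real_inner \<Rightarrow> 'h) \<Rightarrow> bool" where
  "complex_structure J \<longleftrightarrow> linear J \<and> (\<forall>x. J (J x) = - x) \<and> (\<forall>x y. inner (J x) (J y) = inner x y)"

definition complex_subspace :: "('h::real_inner \<Rightarrow> 'h) \<Rightarrow> 'h set \<Rightarrow> bool" where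
  "complex_subspace J M \<longleftrightarrow> subspace M \<and> J ` M \<subseteq> M"

definition selfadjoint :: "('h::real_inner \<Rightarrow> 'h) \<Rightarrow> 'h set \<Rightarrow> ('h \<Rightarrow> 'h) \<Rightarrow> bool" where
  "selfadjoint J D A \<longleftrightarrow>
     complex_subspace J D \<and> closure D = UNIV \<and>
     (\<forall>x\<in>D. \<forall>y\<in>D. A (x + y) = A x + A y) \<and>
     (\<forall>x\<in>D. \<forall>c. A (c *\<^sub>R x) = c *\<^sub>R A x) \<and>
     (\<forall>x\<in>D. A (J x) = J (A x)) \<and>
     (\<forall>y. y \<in> D \<longleftrightarrow> (\<exists>z. \<forall>x\<in>D. inner (A x) y = inner x z)) \<and>
     (\<forall>x\<in>D. \<forall>y\<in>D. inner (A x) y = inner x (A y))"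

definition zero_in_spectrum :: "'h::real_normed_vector set \<Rightarrow> ('h \<Rightarrow> 'h) \<Rightarrow> bool" where
  "zero_in_spectrum D A \<longleftrightarrow>
     \<not> (\<exists>B. bounded_linear B \<and> (\<forall>y. B y \<in> D \<and> A (B y) = y) \<and> (\<forall>x\<in>D. B (A x) = x))"

definition opfun_spectrum :: "real set \<Rightarrow> (real \<Rightarrow> 'h::real_normed_vector set) \<Rightarrow> (real \<Rightarrow> 'h \<Rightarrow> 'h) \<Rightarrow> real set" where
  "opfun_spectrum \<Delta> Dom T = {l \<in> \<Delta>. zero_in_spectrum (Dom l) (T l)}"

definition spec_qmeasure :: "(real set \<Rightarrow> 'h::real_inner \<Rightarrow> 'h) \<Rightarrow> 'h \<Rightarrow> real measure" where
  "spec_qmeasure E x = measure_of UNIV (sets borel) (\<lambda>B. ennreal (inner (E B x) x))"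

text \<open>E is the spectral measure of the self-adjoint operator A (domain D):
  a (complex-linear) projection valued measure on the Borel sets with A = \<integral> \<mu> dE(\<mu>),
  i.e. D = {x. \<integral> \<mu>^2 d<E x,x> < \<infinity>} and <Ax,x> = \<integral> \<mu> d<E x,x> on D
  (this determines the symmetric operator A by polarization).\<close>
definition spectral_measure_of ::
  "('h::real_inner \<Rightarrow> 'h) \<Rightarrow> 'h set \<Rightarrow> ('h \<Rightarrow> 'h) \<Rightarrow> (real set \<Rightarrow> 'h \<Rightarrow> 'h) \<Rightarrow> bool" where
  "spectral_measure_of J D A E \<longleftrightarrow>
     (\<forall>B\<in>sets borel. bounded_linear (E B) \<and> (\<forall>x. E B (E B x) = E B x) \<and>
         (\<forall>x y. inner (E B x) y = inner x (E B y)) \<and> (\<forall>x. E B (J x) = J (E B x))) \<and>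
     (\<forall>x. E UNIV x = x) \<and>
     (\<forall>B\<in>sets borel. \<forall>C\<in>sets borel. \<forall>x. E (B \<inter> C) x = E B (E C x)) \<and>
     (\<forall>x F. range F \<subseteq> sets borel \<longrightarrow> disjoint_family F \<longrightarrow>
         (\<lambda>n. inner (E (F n) x) x) sums inner (E (\<Union>(range F)) x) x) \<and>
     D = {x. integrable (spec_qmeasure E x) (\<lambda>\<mu>. \<mu> ^ 2)} \<and>
     (\<forall>x\<in>D. inner (A x) x = integral\<^sup>L (spec_qmeasure E x) (\<lambda>\<mu>. \<mu>))"

text \<open>Form domain dom(|A|^(1/2)) = {x. \<integral> |\<mu>| d<E x,x> < \<infinity>} and the form a[x] = \<integral> \<mu> d<E x,x>.\<close>
definition form_dom :: "(real set \<Rightarrow> 'h::real_inner \<Rightarrow> 'h) \<Rightarrow> 'h set" where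
  "form_dom E = {x. integrable (spec_qmeasure E x) (\<lambda>\<mu>. \<mu>)}"

definition sform :: "(real set \<Rightarrow> 'h::real_inner \<Rightarrow> 'h) \<Rightarrow> 'h \<Rightarrow> real" where
  "sform E x = integral\<^sup>L (spec_qmeasure E x) (\<lambda>\<mu>. \<mu>)"

end

theory Submission
  imports Defs
begin

text \<open>Since \<mu>2 lies in the spectrum of T(\<mu>2), the spectral projection of T(\<mu>2) for a small
  band (-e, e) is nonzero: otherwise T(\<mu>2) would be bounded below by e and hence boundedly
  invertible. Adjoining a vector x from the range of this projection (together with J x) to M gives
  a strictly larger subspace M' on which the form at \<mu>2 is at least -e times the squared norm,
  because x only adds spectral mass inside the band. For a unit vector w of M', the function
  \<lambda> \<mapsto> t(\<lambda>)[w] changes sign at most once, from positive to negative, and by (VM) it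
  decreases at rate at least \<delta> while its absolute value is at most \<epsilon>. Starting from a
  value at least -e at \<mu>2 with e small against \<epsilon> and \<delta>(\<mu>2 - \<mu>1), it must therefore
  be positive at \<mu>1.\<close>

section \<open>Orthogonal projection onto a closed subspace\<close>

lemma parallelogram_midpoint:
  fixes y u v :: "'a::real_inner"
  shows "(norm (u - v))\<^sup>2 =
    2 * (norm (y - u))\<^sup>2 + 2 * (norm (y - v))\<^sup>2 - 4 * (norm (y - (1/2) *\<^sub>R (u + v)))\<^sup>2"
  by (simp add: power2_norm_eq_inner inner_diff_left inner_diff_right inner_add_left
      inner_add_right inner_commute algebra_simps)

lemma minimizing_sequence_Cauchy:
  fixes R :: "'a::real_inner set"
  assumes sub: "subspace R" and rr: "\<And>n. rr n \<in> R"
    and d_le: "\<And>r. r \<in> R \<Longrightarrow> d \<le> (norm (y - r))\<^sup>2"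
    and almost: "\<And>n. (norm (y - rr n))\<^sup>2 < d + 1 / Suc n"
  shows "Cauchy rr"
proof (rule metric_CauchyI)
  have close: "(norm (rr n - rr m))\<^sup>2 < 2 / Suc n + 2 / Suc m" for n m
  proof -
    have "(1/2) *\<^sub>R (rr n + rr m) \<in> R"
      using rr sub by (simp add: subspace_add subspace_scale)
    then show ?thesis
      using parallelogram_midpoint[of "rr n" "rr m" y] d_le almost[of n] almost[of m] by fastforce
  qed
  fix e :: real assume e: "e > 0"
  obtain N :: nat where N: "4 / e\<^sup>2 < N" using reals_Archimedean2 by blast
  have "4 / real (Suc N) < e\<^sup>2"
    using N e by (simp add: field_simps) (smt (verit) mult_right_mono zero_le_power2)
  show "\<exists>N. \<forall>m\<ge>N. \<forall>n\<ge>N. dist (rr m) (rr n) < e"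
  proof (intro exI allI impI)
    fix m n assume mn: "N \<le> m" "N \<le> n"
    have "2 / real (Suc n) \<le> 2 / Suc N" "2 / real (Suc m) \<le> 2 / Suc N"
      using mn by (auto intro!: divide_left_mono)
    then have "(norm (rr m - rr n))\<^sup>2 < e\<^sup>2"
      using close[of m n] \<open>4 / real (Suc N) < e\<^sup>2\<close> by linarith
    then show "dist (rr m) (rr n) < e"
      using e by (simp add: dist_norm power_less_imp_less_base)
  qed
qed

lemma closed_subspace_nearest_point:
  fixes R :: "'a::{real_inner,complete_space} set"
  assumes sub: "subspace R" and cl: "closed R"
  shows "\<exists>r\<in>R. \<forall>r'\<in>R. norm (y - r) \<le> norm (y - r')"
proof -
  define d where "d = Inf {(norm (y - r))\<^sup>2 | r. r \<in> R}"
  have bdd: "bdd_below {(norm (y - r))\<^sup>2 | r. r \<in> R}"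
    by (rule bdd_belowI[of _ 0]) auto
  have d_le: "d \<le> (norm (y - r))\<^sup>2" if "r \<in> R" for r
    unfolding d_def using bdd that by (auto intro!: cInf_lower)
  have "\<exists>r\<in>R. (norm (y - r))\<^sup>2 < d + 1 / Suc n" for n
    using cInf_lessD[of "{(norm (y - r))\<^sup>2 | r. r \<in> R}" "d + 1 / Suc n"] sub subspace_0
    unfolding d_def by fastforce
  then obtain rr where rr: "\<And>n. rr n \<in> R" "\<And>n. (norm (y - rr n))\<^sup>2 < d + 1 / Suc n"
    by metis
  then obtain r where lim: "rr \<longlonglongrightarrow> r"
    using minimizing_sequence_Cauchy[OF sub rr(1) d_le rr(2)] Cauchy_convergent convergent_def
    by blast
  have "r \<in> R" using cl lim rr(1) closed_sequential_limits by blast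
  moreover have "(norm (y - r))\<^sup>2 \<le> d"
  proof (rule tendsto_le[OF trivial_limit_sequentially])
    show "(\<lambda>n. d + 1 / Suc n) \<longlonglongrightarrow> d"
      using tendsto_add[OF tendsto_const LIMSEQ_inverse_real_of_nat] by (simp add: inverse_eq_divide)
    show "(\<lambda>n. (norm (y - rr n))\<^sup>2) \<longlonglongrightarrow> (norm (y - r))\<^sup>2"
      by (intro tendsto_intros lim)
    show "\<forall>\<^sub>F n in sequentially. (norm (y - rr n))\<^sup>2 \<le> d + 1 / Suc n"
      using rr(2) less_imp_le by (auto intro!: always_eventually)
  qed
  ultimately show ?thesis
    using d_le by (metis norm_ge_zero order.trans power2_le_imp_le)
qed

lemma nearest_point_orthogonal:
  fixes R :: "'a::real_inner set"
  assumes sub: "subspace R" and r: "r \<in> R" and near: "\<forall>r'\<in>R. norm (y - r) \<le> norm (y - r')"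
    and w: "w \<in> R"
  shows "inner (y - r) w = 0"
proof (cases "w = 0")
  case False
  define t where "t = inner (y - r) w / inner w w"
  have ww: "inner w w > 0" using False by simp
  have "r + t *\<^sub>R w \<in> R" using r w sub by (simp add: subspace_add subspace_scale)
  then have "(norm (y - r))\<^sup>2 \<le> (norm ((y - r) - t *\<^sub>R w))\<^sup>2"
    using near by (simp add: algebra_simps)
  also have "\<dots> = (norm (y - r))\<^sup>2 - 2 * t * inner (y - r) w + t\<^sup>2 * inner w w"
    unfolding power2_norm_eq_inner
    by (simp add: inner_diff_left inner_diff_right inner_commute power2_eq_square algebra_simps)
  also have "\<dots> = (norm (y - r))\<^sup>2 - (inner (y - r) w)\<^sup>2 / inner w w"
    using ww by (simp add: t_def power2_eq_square field_simps)
  finally have "(inner (y - r) w)\<^sup>2 / inner w w \<le> 0" by simp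
  then show ?thesis using ww by (simp add: divide_le_0_iff)
qed simp

lemma orthogonal_to_dense_eq_0:
  fixes u :: "'a::real_inner"
  assumes dense: "closure D = UNIV" and orth: "\<forall>w\<in>D. inner w u = 0"
  shows "u = 0"
proof -
  obtain s where s: "\<And>n. s n \<in> D" "s \<longlonglongrightarrow> u"
    using dense closure_sequential by (metis UNIV_I)
  have "(\<lambda>n. inner (s n) u) \<longlonglongrightarrow> inner u u" by (intro tendsto_intros s)
  moreover have "(\<lambda>n. inner (s n) u) = (\<lambda>n. 0)" using orth s(1) by auto
  ultimately have "inner u u = 0" using LIMSEQ_unique tendsto_const by metis
  then show ?thesis by simp
qed

section \<open>Self-adjoint operators that are bounded below\<close>

lemma selfadjoint_subspace: "selfadjoint J D A \<Longrightarrow> subspace D"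
  unfolding selfadjoint_def complex_subspace_def by blast

lemma selfadjoint_dense: "selfadjoint J D A \<Longrightarrow> closure D = UNIV"
  unfolding selfadjoint_def by blast

lemma selfadjoint_add: "selfadjoint J D A \<Longrightarrow> x \<in> D \<Longrightarrow> y \<in> D \<Longrightarrow> A (x + y) = A x + A y"
  unfolding selfadjoint_def by blast

lemma selfadjoint_scale: "selfadjoint J D A \<Longrightarrow> x \<in> D \<Longrightarrow> A (c *\<^sub>R x) = c *\<^sub>R A x"
  unfolding selfadjoint_def by blast

lemma selfadjoint_symmetric:
  "selfadjoint J D A \<Longrightarrow> x \<in> D \<Longrightarrow> y \<in> D \<Longrightarrow> inner (A x) y = inner x (A y)"
  unfolding selfadjoint_def by blast

lemma selfadjoint_domain_adjoint:
  "selfadjoint J D A \<Longrightarrow> (\<forall>x\<in>D. inner (A x) y = inner x z) \<Longrightarrow> y \<in> D"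
  unfolding selfadjoint_def by blast

lemma selfadjoint_zero: "selfadjoint J D A \<Longrightarrow> A 0 = 0"
  using selfadjoint_scale[of J D A 0 0] subspace_0[OF selfadjoint_subspace, of J D A] by simp

lemma selfadjoint_diff:
  assumes "selfadjoint J D A" "x \<in> D" "y \<in> D"
  shows "A (x - y) = A x - A y"
  using selfadjoint_add[OF assms(1,2), of "(-1) *\<^sub>R y"] selfadjoint_scale[OF assms(1,3), of "-1"]
    selfadjoint_subspace[OF assms(1)] assms(3) by (simp add: subspace_neg)

lemma selfadjoint_closed_graph:
  assumes sa: "selfadjoint J D A" and xs: "\<And>n. xs n \<in> D" "xs \<longlonglongrightarrow> x" "(\<lambda>n. A (xs n)) \<longlonglongrightarrow> y"
  shows "x \<in> D" and "A x = y"
proof -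
  have adj: "inner (A w) x = inner w y" if w: "w \<in> D" for w
  proof -
    have "(\<lambda>n. inner (A w) (xs n)) \<longlonglongrightarrow> inner (A w) x" by (intro tendsto_intros xs)
    moreover have "(\<lambda>n. inner (A w) (xs n)) = (\<lambda>n. inner w (A (xs n)))"
      using selfadjoint_symmetric[OF sa w] xs(1) by auto
    moreover have "(\<lambda>n. inner w (A (xs n))) \<longlonglongrightarrow> inner w y" by (intro tendsto_intros xs)
    ultimately show ?thesis using LIMSEQ_unique by metis
  qed
  then show xD: "x \<in> D" using selfadjoint_domain_adjoint[OF sa] by blast
  have "\<forall>w\<in>D. inner w (A x - y) = 0"
    using adj selfadjoint_symmetric[OF sa _ xD] by (simp add: inner_diff_right)
  then have "A x - y = 0" by (rule orthogonal_to_dense_eq_0[OF selfadjoint_dense[OF sa]])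
  then show "A x = y" by simp
qed

lemma selfadjoint_range_subspace:
  assumes sa: "selfadjoint J D A"
  shows "subspace (A ` D)"
  unfolding subspace_def
proof (intro conjI ballI allI)
  have D: "subspace D" by (rule selfadjoint_subspace[OF sa])
  show "0 \<in> A ` D" using selfadjoint_zero[OF sa] subspace_0[OF D] by force
  show "u + v \<in> A ` D" if uv: "u \<in> A ` D" "v \<in> A ` D" for u v
  proof -
    obtain x y where xy: "x \<in> D" "y \<in> D" and "u = A x" "v = A y" using uv by blast
    then have "u + v = A (x + y)" using selfadjoint_add[OF sa xy] by simp
    then show ?thesis using subspace_add[OF D xy] by (rule image_eqI)
  qed
  show "r *\<^sub>R u \<in> A ` D" if u: "u \<in> A ` D" for r u
  proof -
    obtain x where x: "x \<in> D" and "u = A x" using u by blast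
    then have "r *\<^sub>R u = A (r *\<^sub>R x)" using selfadjoint_scale[OF sa x] by simp
    then show ?thesis using subspace_scale[OF D x] by (rule image_eqI)
  qed
qed

context
  fixes J A :: "'h::{real_inner,complete_space} \<Rightarrow> 'h" and D :: "'h set" and c :: real
  assumes sa: "selfadjoint J D A" and c_pos: "c > 0"
    and below: "\<forall>x\<in>D. c * norm x \<le> norm (A x)"
begin

lemma bounded_below_dist:
  assumes "x \<in> D" "y \<in> D"
  shows "c * dist x y \<le> dist (A x) (A y)"
proof -
  have "x - y \<in> D" using subspace_diff[OF selfadjoint_subspace[OF sa] assms] .
  then have "c * norm (x - y) \<le> norm (A (x - y))" using below by blast
  then show ?thesis using selfadjoint_diff[OF sa assms] by (simp add: dist_norm)
qed

lemma bounded_below_inj: "x \<in> D \<Longrightarrow> y \<in> D \<Longrightarrow> A x = A y \<Longrightarrow> x = y"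
  using bounded_below_dist[of x y] c_pos by (simp add: mult_le_0_iff)

lemma bounded_below_closed_range: "closed (A ` D)"
  unfolding closed_sequential_limits
proof (intro allI impI, elim conjE)
  fix s y assume s: "\<forall>n. s n \<in> A ` D" and lim: "s \<longlonglongrightarrow> y"
  define xs where "xs n = inv_into D A (s n)" for n
  have xs: "xs n \<in> D" "A (xs n) = s n" for n
    using s unfolding xs_def by (simp_all add: inv_into_into f_inv_into_f)
  have "Cauchy xs"
  proof (rule metric_CauchyI)
    fix e :: real assume "e > 0"
    then have "c * e > 0" using c_pos by simp
    then obtain N where N: "\<forall>m\<ge>N. \<forall>n\<ge>N. dist (s m) (s n) < c * e"
      using metric_CauchyD[OF LIMSEQ_imp_Cauchy[OF lim]] by blast
    have "dist (xs m) (xs n) < e" if "m \<ge> N" "n \<ge> N" for m n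
    proof -
      have "c * dist (xs m) (xs n) \<le> dist (s m) (s n)"
        using bounded_below_dist[OF xs(1) xs(1)] unfolding xs(2) .
      also have "\<dots> < c * e" using N that by blast
      finally show ?thesis using c_pos by simp
    qed
    then show "\<exists>N. \<forall>m\<ge>N. \<forall>n\<ge>N. dist (xs m) (xs n) < e" by blast
  qed
  then obtain x where x: "xs \<longlonglongrightarrow> x" using Cauchy_convergent convergent_def by blast
  have "(\<lambda>n. A (xs n)) \<longlonglongrightarrow> y" using lim by (simp add: xs(2))
  then have "x \<in> D" "y = A x" using selfadjoint_closed_graph[OF sa xs(1) x] by auto
  then show "y \<in> A ` D" by blast
qed

lemma bounded_below_surj: "\<exists>x\<in>D. A x = y"
proof -
  have R: "subspace (A ` D)" by (rule selfadjoint_range_subspace[OF sa])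
  obtain r where r: "r \<in> A ` D" and near: "\<forall>r'\<in>A ` D. norm (y - r) \<le> norm (y - r')"
    using closed_subspace_nearest_point[OF R bounded_below_closed_range] by blast
  have orth: "inner (y - r) w = 0" if "w \<in> A ` D" for w
    by (rule nearest_point_orthogonal[OF R r near that])
  have D: "subspace D" by (rule selfadjoint_subspace[OF sa])
  \<comment> \<open>y - r is orthogonal to the range, hence lies in the kernel of the adjoint, which is A.\<close>
  have adj: "\<forall>w\<in>D. inner (A w) (y - r) = inner w 0"
    using orth by (simp add: inner_commute)
  then have yr: "y - r \<in> D" by (rule selfadjoint_domain_adjoint[OF sa])
  have "\<forall>w\<in>D. inner w (A (y - r)) = 0"
    using adj selfadjoint_symmetric[OF sa _ yr] by simp
  then have "A (y - r) = 0"
    by (rule orthogonal_to_dense_eq_0[OF selfadjoint_dense[OF sa]])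
  then have "y - r = 0"
    using bounded_below_inj[OF yr subspace_0[OF D]] selfadjoint_zero[OF sa] by simp
  then show ?thesis using r by auto
qed

lemma bounded_below_zero_notin_spectrum: "\<not> zero_in_spectrum D A"
proof -
  define B where "B y = (SOME x. x \<in> D \<and> A x = y)" for y
  have B: "B y \<in> D" "A (B y) = y" for y
    using someI_ex[OF bounded_below_surj[of y, unfolded Bex_def]] unfolding B_def by auto
  have D: "subspace D" by (rule selfadjoint_subspace[OF sa])
  have "bounded_linear B"
  proof (rule bounded_linear_intro[where K = "1 / c"])
    fix x y r
    have "A (B x + B y) = A (B (x + y))" using selfadjoint_add[OF sa B(1) B(1)] B(2) by simp
    then show "B (x + y) = B x + B y"
      using bounded_below_inj[OF subspace_add[OF D B(1)[of x] B(1)[of y]] B(1)[of "x + y"]] by simp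
    have "A (r *\<^sub>R B x) = A (B (r *\<^sub>R x))" using selfadjoint_scale[OF sa B(1)] B(2) by simp
    then show "B (r *\<^sub>R x) = r *\<^sub>R B x"
      using bounded_below_inj[OF subspace_scale[OF D B(1)[of x], of r] B(1)[of "r *\<^sub>R x"]] by simp
    show "norm (B x) \<le> norm x * (1 / c)"
      using below[rule_format, OF B(1)[of x]] B(2)[of x] c_pos by (simp add: field_simps)
  qed
  moreover have "B (A x) = x" if "x \<in> D" for x
    using bounded_below_inj[OF B(1) that] B(2) by simp
  ultimately show ?thesis unfolding zero_in_spectrum_def using B by blast
qed

end

section \<open>Projection-valued measures\<close>

locale proj_valued_measure =
  fixes E :: "real set \<Rightarrow> 'h::real_inner \<Rightarrow> 'h"
  assumes E_linear: "B \<in> sets borel \<Longrightarrow> bounded_linear (E B)"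
    and E_idem: "B \<in> sets borel \<Longrightarrow> E B (E B x) = E B x"
    and E_symmetric: "B \<in> sets borel \<Longrightarrow> inner (E B x) y = inner x (E B y)"
    and E_UNIV: "E UNIV x = x"
    and E_Int: "B \<in> sets borel \<Longrightarrow> C \<in> sets borel \<Longrightarrow> E (B \<inter> C) x = E B (E C x)"
    and E_sums: "range F \<subseteq> sets borel \<Longrightarrow> disjoint_family F \<Longrightarrow>
      (\<lambda>n. inner (E (F n) x) x) sums inner (E (\<Union>(range F)) x) x"

lemma spectral_measure_of_imp_pvm:
  assumes "spectral_measure_of J D A E"
  shows "proj_valued_measure E"
proof (rule proj_valued_measure.intro)
  note h = assms[unfolded spectral_measure_of_def]
  note proj = h[THEN conjunct1] and unit = h[THEN conjunct2, THEN conjunct1]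
    and mult = h[THEN conjunct2, THEN conjunct2, THEN conjunct1]
    and sums = h[THEN conjunct2, THEN conjunct2, THEN conjunct2, THEN conjunct1]
  show "bounded_linear (E B)" "E B (E B x) = E B x" "inner (E B x) y = inner x (E B y)"
    if "B \<in> sets borel" for B x y
    using bspec[OF proj that] by blast+
  show "E UNIV x = x" for x using unit by blast
  show "E (B \<inter> C) x = E B (E C x)" if "B \<in> sets borel" "C \<in> sets borel" for B C x
    using mult that by blast
  show "(\<lambda>n. inner (E (F n) x) x) sums inner (E (\<Union>(range F)) x) x"
    if "range F \<subseteq> sets borel" "disjoint_family F" for F x
    using sums that by blast
qed

lemma spectral_measure_of_commute:
  "spectral_measure_of J D A E \<Longrightarrow> B \<in> sets borel \<Longrightarrow> E B (J x) = J (E B x)"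
  unfolding spectral_measure_of_def by simp

lemma spectral_measure_of_domain:
  "spectral_measure_of J D A E \<Longrightarrow> D = {x. integrable (spec_qmeasure E x) (\<lambda>\<mu>. \<mu> ^ 2)}"
  unfolding spectral_measure_of_def by simp

lemma spectral_measure_of_form:
  "spectral_measure_of J D A E \<Longrightarrow> x \<in> D \<Longrightarrow> inner (A x) x = sform E x"
  unfolding spectral_measure_of_def sform_def by simp

context proj_valued_measure
begin

abbreviation "nu x \<equiv> spec_qmeasure E x"

lemma inner_E_self: "B \<in> sets borel \<Longrightarrow> inner (E B x) (E B x) = inner (E B x) x"
  using E_symmetric[of B "E B x" x] by (simp add: E_idem)

lemma inner_E_nonneg: "B \<in> sets borel \<Longrightarrow> 0 \<le> inner (E B x) x"
  using inner_E_self[of B x] inner_ge_zero[of "E B x"] by linarith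

lemma E_empty: "E {} x = 0"
proof -
  have "(\<lambda>n. inner (E ((\<lambda>_. {}) n) x) x) sums inner (E (\<Union>(range (\<lambda>_::nat. {}))) x) x"
    by (rule E_sums) (auto simp: disjoint_family_on_def)
  then have "(\<lambda>n::nat. inner (E {} x) x) \<longlonglongrightarrow> 0" by (intro summable_LIMSEQ_zero sums_summable) simp
  then have "inner (E {} x) x = 0" by (simp add: LIMSEQ_const_iff)
  then show ?thesis using inner_E_self[of "{}" x] by simp
qed

lemma E_orthogonal_compl:
  assumes B: "B \<in> sets borel"
  shows "inner (E B x) (E (- B) x) = 0"
proof -
  have "inner (E B x) (E (- B) x) = inner (E (- B) (E B x)) x"
    using E_symmetric[of "- B" "E B x" x] B by (simp add: inner_commute)
  also have "\<dots> = 0" using E_Int[of "- B" B x] B by (simp add: E_empty)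
  finally show ?thesis .
qed

lemma sets_nu[simp]: "sets (nu x) = sets borel"
  unfolding spec_qmeasure_def
  by (simp add: sets_measure_of_conv sets.sigma_sets_eq[of borel, simplified])

lemma space_nu[simp]: "space (nu x) = UNIV"
  using sets_eq_imp_space_eq[OF sets_nu[of x]] by simp

lemma emeasure_nu: "B \<in> sets borel \<Longrightarrow> emeasure (nu x) B = ennreal (inner (E B x) x)"
  unfolding spec_qmeasure_def
proof (rule emeasure_measure_of_sigma)
  show "sigma_algebra UNIV (sets borel)" using sets.sigma_algebra_axioms[of borel] by simp
  show "positive (sets borel) (\<lambda>B. ennreal (inner (E B x) x))"
    unfolding positive_def by (simp add: E_empty)
  show "countably_additive (sets borel) (\<lambda>B. ennreal (inner (E B x) x))"
    unfolding countably_additive_def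
  proof (intro allI impI)
    fix F :: "nat \<Rightarrow> real set" assume F: "range F \<subseteq> sets borel" "disjoint_family F"
    have "(\<lambda>n. ennreal (inner (E (F n) x) x)) sums ennreal (inner (E (\<Union>(range F)) x) x)"
      using E_sums[OF F] F(1) inner_E_nonneg sets.countable_UN[of F UNIV borel] by auto
    then show "(\<Sum>n. ennreal (inner (E (F n) x) x)) = ennreal (inner (E (\<Union>(range F)) x) x)"
      by (rule sums_unique[symmetric])
  qed
qed

lemma finite_measure_nu: "finite_measure (nu x)"
  by (rule finite_measureI) (simp add: emeasure_nu[of UNIV, simplified])

lemma measure_nu: "B \<in> sets borel \<Longrightarrow> measure (nu x) B = inner (E B x) x"
  by (simp add: measure_def emeasure_nu inner_E_nonneg)

lemma measurable_nu: "(f :: real \<Rightarrow> real) \<in> borel_measurable borel \<Longrightarrow> f \<in> borel_measurable (nu x)"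
  using measurable_cong_sets[OF sets_nu[of x] refl, of "borel :: real measure"] by simp

lemma inner_E_le: "B \<in> sets borel \<Longrightarrow> inner (E B x) x \<le> inner x x"
proof -
  assume B: "B \<in> sets borel"
  interpret finite_measure "nu x" by (rule finite_measure_nu)
  have "measure (nu x) B \<le> measure (nu x) UNIV" using B by (intro finite_measure_mono) auto
  then show ?thesis using measure_nu[OF B] measure_nu[of UNIV x] by (simp add: E_UNIV)
qed

lemma E_compl: "B \<in> sets borel \<Longrightarrow> E (- B) x = x - E B x"
proof -
  assume B: "B \<in> sets borel"
  then have B': "- B \<in> sets borel" by auto
  interpret finite_measure "nu x" by (rule finite_measure_nu)
  have "measure (nu x) (B \<union> - B) = measure (nu x) B + measure (nu x) (- B)"
    using B B' by (intro finite_measure_Union) auto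
  then have sum: "inner (E B x) x + inner (E (- B) x) x = inner x x"
    using measure_nu[OF B] measure_nu[OF B'] measure_nu[of UNIV x] by (simp add: E_UNIV)
  define w where "w = x - E B x - E (- B) x"
  have "inner w w = inner x x - 2 * inner (E B x) x - 2 * inner (E (-B) x) x
     + inner (E B x) (E B x) + inner (E (-B) x) (E (-B) x) + 2 * inner (E B x) (E (- B) x)"
    unfolding w_def by (simp add: inner_diff_left inner_diff_right inner_commute algebra_simps)
  also have "\<dots> = 0"
    using sum inner_E_self[OF B] inner_E_self[OF B'] E_orthogonal_compl[OF B] by simp
  finally have "w = 0" by simp
  then show ?thesis unfolding w_def by (simp add: algebra_simps)
qed

lemma nu_E: "A \<in> sets borel \<Longrightarrow> nu (E A x) = density (nu x) (\<lambda>\<mu>. ennreal (indicator A \<mu>))"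
proof (rule measure_eqI)
  assume A: "A \<in> sets borel"
  show "sets (nu (E A x)) = sets (density (nu x) (\<lambda>\<mu>. ennreal (indicator A \<mu>)))" by simp
  fix B assume "B \<in> sets (nu (E A x))"
  then have B: "B \<in> sets borel" by simp
  have "inner (E B (E A x)) (E A x) = inner (E A (E B (E A x))) x"
    by (metis E_symmetric[OF A] inner_commute)
  also have "\<dots> = inner (E (A \<inter> (B \<inter> A)) x) x" using A B by (simp add: E_Int)
  also have "A \<inter> (B \<inter> A) = A \<inter> B" by auto
  finally have "inner (E B (E A x)) (E A x) = inner (E (A \<inter> B) x) x" .
  then show "emeasure (nu (E A x)) B = emeasure (density (nu x) (\<lambda>\<mu>. ennreal (indicator A \<mu>))) B"
    using A B by (simp add: emeasure_nu emeasure_restricted ennreal_indicator)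
qed

lemma integral_nu_E:
  assumes A: "A \<in> sets borel" and f: "f \<in> borel_measurable borel"
  shows "integral\<^sup>L (nu (E A x)) (f :: real \<Rightarrow> real) = integral\<^sup>L (nu x) (\<lambda>\<mu>. indicator A \<mu> * f \<mu>)"
  using integral_density[where M = "nu x" and g = "indicator A" and f = f] A measurable_nu[OF f]
    borel_measurable_indicator[of A "nu x"] by (simp add: nu_E)

lemma integrable_nu_E:
  assumes A: "A \<in> sets borel" and f: "f \<in> borel_measurable borel"
  shows "integrable (nu (E A x)) (f :: real \<Rightarrow> real) \<longleftrightarrow> integrable (nu x) (\<lambda>\<mu>. indicator A \<mu> * f \<mu>)"
  using integrable_density[where M = "nu x" and g = "indicator A" and f = f] A measurable_nu[OF f]
    borel_measurable_indicator[of A "nu x"] by (simp add: nu_E)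

lemma sform_scale: "sform E (r *\<^sub>R x) = r\<^sup>2 * sform E x"
proof -
  have "nu (r *\<^sub>R x) = density (nu x) (\<lambda>_. ennreal (r\<^sup>2))"
  proof (rule measure_eqI)
    fix B assume "B \<in> sets (nu (r *\<^sub>R x))"
    then have B: "B \<in> sets borel" by simp
    have "inner (E B (r *\<^sub>R x)) (r *\<^sub>R x) = r\<^sup>2 * inner (E B x) x"
      using linear_scale[OF bounded_linear.linear[OF E_linear[OF B]]] by (simp add: power2_eq_square)
    then show "emeasure (nu (r *\<^sub>R x)) B = emeasure (density (nu x) (\<lambda>_. ennreal (r\<^sup>2))) B"
      using B by (simp add: emeasure_nu emeasure_density_const ennreal_mult inner_E_nonneg)
  qed simp
  then show ?thesis
    unfolding sform_def using integral_density[where M = "nu x" and g = "\<lambda>_. r\<^sup>2" and f = "\<lambda>\<mu>. \<mu>"]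
    by (simp add: measurable_nu)
qed

lemma sform_normalize: "x \<noteq> 0 \<Longrightarrow> sform E x = (norm x)\<^sup>2 * sform E (x /\<^sub>R norm x)"
  using sform_scale[of "norm x" "x /\<^sub>R norm x"] by simp

lemma integrable_nu_square_imp:
  assumes "integrable (nu x) (\<lambda>\<mu>. \<mu>\<^sup>2)"
  shows "integrable (nu x) (\<lambda>\<mu>. \<mu>)"
proof (rule Bochner_Integration.integrable_bound)
  interpret finite_measure "nu x" by (rule finite_measure_nu)
  show "integrable (nu x) (\<lambda>\<mu>. 1 + \<mu>\<^sup>2)" using assms by simp
  show "(\<lambda>\<mu>::real. \<mu>) \<in> borel_measurable (nu x)" by (simp add: measurable_nu)
  have "\<bar>\<mu>\<bar> \<le> 1 + \<mu>\<^sup>2" for \<mu> :: real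
  proof (cases "\<bar>\<mu>\<bar> \<le> 1")
    case False
    then have "\<bar>\<mu>\<bar> * 1 \<le> \<bar>\<mu>\<bar> * \<bar>\<mu>\<bar>" by (intro mult_left_mono) auto
    then show ?thesis by (simp add: power2_eq_square)
  qed (simp add: add_increasing2)
  then show "AE \<mu> in nu x. norm \<mu> \<le> norm (1 + \<mu>\<^sup>2)" by simp
qed

end

section \<open>Spectral gaps\<close>

lemma integral_indicator_mult_ge:
  fixes M :: "real measure"
  assumes "finite_measure M" and P: "P \<in> sets M"
    and int: "integrable M (\<lambda>\<mu>. indicator P \<mu> * \<mu>)" and ge: "AE \<mu> in M. \<mu> \<in> P \<longrightarrow> c \<le> \<mu>"
  shows "c * measure M P \<le> integral\<^sup>L M (\<lambda>\<mu>. indicator P \<mu> * \<mu>)"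
proof -
  interpret finite_measure M by fact
  have cint: "integrable M (\<lambda>\<mu>. c * indicator P \<mu>)"
    using P by (intro integrable_mult_right integrable_real_indicator) (simp_all add: less_top[symmetric])
  have "AE \<mu> in M. c * indicator P \<mu> \<le> indicator P \<mu> * \<mu>"
    using ge by eventually_elim (auto simp: indicator_def)
  then have "integral\<^sup>L M (\<lambda>\<mu>. c * indicator P \<mu>) \<le> integral\<^sup>L M (\<lambda>\<mu>. indicator P \<mu> * \<mu>)"
    by (rule integral_mono_AE[OF cint int])
  then show ?thesis using P by simp
qed

lemma integral_indicator_mult_le:
  fixes M :: "real measure"
  assumes "finite_measure M" and P: "P \<in> sets M"
    and int: "integrable M (\<lambda>\<mu>. indicator P \<mu> * \<mu>)" and le: "AE \<mu> in M. \<mu> \<in> P \<longrightarrow> \<mu> \<le> c"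
  shows "integral\<^sup>L M (\<lambda>\<mu>. indicator P \<mu> * \<mu>) \<le> c * measure M P"
proof -
  interpret finite_measure M by fact
  have cint: "integrable M (\<lambda>\<mu>. c * indicator P \<mu>)"
    using P by (intro integrable_mult_right integrable_real_indicator) (simp_all add: less_top[symmetric])
  have "AE \<mu> in M. indicator P \<mu> * \<mu> \<le> c * indicator P \<mu>"
    using le by eventually_elim (auto simp: indicator_def)
  then have "integral\<^sup>L M (\<lambda>\<mu>. indicator P \<mu> * \<mu>) \<le> integral\<^sup>L M (\<lambda>\<mu>. c * indicator P \<mu>)"
    by (rule integral_mono_AE[OF int cint])
  then show ?thesis using P by simp
qed

lemma indefinite_decomposition_bounded_below:
  fixes A :: "'a::real_inner \<Rightarrow> 'a"
  assumes add: "A (p + n) = A p + A n" and sym: "inner (A n) p = inner n (A p)"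
    and orth: "inner p n = 0"
    and split: "inner (A (p + n)) (p + n) = inner (A p) p + inner (A n) n"
    and pos: "e * inner p p \<le> inner (A p) p" and neg: "inner (A n) n \<le> - e * inner n n"
  shows "e * norm (p + n) \<le> norm (A (p + n))"
proof -
  have cross: "inner (A p) n = 0"
    using split sym unfolding add by (simp add: inner_add_left inner_add_right inner_commute)
  \<comment> \<open>Pair A x with the reflected vector p - n, so that both parts contribute with the same sign.\<close>
  have "e * (norm (p + n))\<^sup>2 \<le> inner (A (p + n)) (p - n)"
    using cross sym orth pos neg unfolding add
    by (simp add: inner_add_left inner_add_right inner_diff_right power2_norm_eq_inner
        inner_commute algebra_simps)
  also have "\<dots> \<le> norm (A (p + n)) * norm (p - n)" by (rule norm_cauchy_schwarz)
  also have "norm (p - n) = norm (p + n)"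
    using orth by (simp add: norm_eq_sqrt_inner inner_add_left inner_add_right inner_diff_left
        inner_diff_right inner_commute)
  finally have "e * norm (p + n) * norm (p + n) \<le> norm (A (p + n)) * norm (p + n)"
    by (simp add: power2_eq_square mult.assoc)
  then show ?thesis
    by (cases "p + n = 0") (simp_all add: mult_le_cancel_right_pos)
qed

context proj_valued_measure
begin

lemma spectral_domain_E:
  assumes sm: "spectral_measure_of J D A E" and x: "x \<in> D" and P: "P \<in> sets borel"
  shows "E P x \<in> D"
    and "inner (A (E P x)) (E P x) = integral\<^sup>L (nu x) (\<lambda>\<mu>. indicator P \<mu> * \<mu>)"
proof -
  have "integrable (nu x) (\<lambda>\<mu>. indicator P \<mu> *\<^sub>R \<mu>\<^sup>2)"
    using x P spectral_measure_of_domain[OF sm] by (intro integrable_mult_indicator) auto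
  then show ExD: "E P x \<in> D"
    using integrable_nu_E[OF P, of "\<lambda>\<mu>. \<mu>\<^sup>2" x] spectral_measure_of_domain[OF sm] by simp
  show "inner (A (E P x)) (E P x) = integral\<^sup>L (nu x) (\<lambda>\<mu>. indicator P \<mu> * \<mu>)"
    using spectral_measure_of_form[OF sm ExD] integral_nu_E[OF P, of "\<lambda>\<mu>. \<mu>" x]
    unfolding sform_def by simp
qed

lemma spectral_gap_bounded_below:
  assumes sa: "selfadjoint J D A" and sm: "spectral_measure_of J D A E"
    and gap: "\<forall>y. E {-e<..<e} y = 0" and x: "x \<in> D"
  shows "e * norm x \<le> norm (A x)"
proof -
  define P :: "real set" where "P = {0<..}"
  have P: "P \<in> sets borel" and P': "- P \<in> sets borel" unfolding P_def by auto
  interpret finite_measure "nu x" by (rule finite_measure_nu)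
  have int: "integrable (nu x) (\<lambda>\<mu>. \<mu>)"
    using x spectral_measure_of_domain[OF sm] integrable_nu_square_imp by auto
  have intP: "integrable (nu x) (\<lambda>\<mu>. indicator P \<mu> * \<mu>)"
    and intP': "integrable (nu x) (\<lambda>\<mu>. indicator (- P) \<mu> * \<mu>)"
    using integrable_mult_indicator[OF _ int, of P] integrable_mult_indicator[OF _ int, of "- P"] P P'
    by simp_all
  have "emeasure (nu x) {-e<..<e} = 0" using gap by (simp add: emeasure_nu)
  then have AE: "AE \<mu> in nu x. \<mu> \<notin> {-e<..<e}" by (intro AE_not_in) (simp add: null_sets_def)
  note xp = spectral_domain_E[OF sm x P] and xn = spectral_domain_E[OF sm x P']
  have "integral\<^sup>L (nu x) (\<lambda>\<mu>. \<mu>) =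
      integral\<^sup>L (nu x) (\<lambda>\<mu>. indicator P \<mu> * \<mu> + indicator (- P) \<mu> * \<mu>)"
    by (rule arg_cong[where f = "integral\<^sup>L (nu x)"]) (auto simp: indicator_def fun_eq_iff)
  then have "inner (A x) x =
      inner (A (E P x)) (E P x) + inner (A (E (- P) x)) (E (- P) x)"
    using spectral_measure_of_form[OF sm x] xp(2) xn(2) Bochner_Integration.integral_add[OF intP intP']
    unfolding sform_def by simp
  moreover have "AE \<mu> in nu x. \<mu> \<in> P \<longrightarrow> e \<le> \<mu>" "AE \<mu> in nu x. \<mu> \<in> - P \<longrightarrow> \<mu> \<le> - e"
    using AE by (eventually_elim, auto simp: P_def)+
  then have "e * measure (nu x) P \<le> inner (A (E P x)) (E P x)"
    and "inner (A (E (- P) x)) (E (- P) x) \<le> - e * measure (nu x) (- P)"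
    using integral_indicator_mult_ge[OF finite_measure_nu _ intP, of e] xp(2)
      integral_indicator_mult_le[OF finite_measure_nu _ intP', of "- e"] xn(2) P P'
    by simp_all
  then have "e * inner (E P x) (E P x) \<le> inner (A (E P x)) (E P x)"
    and "inner (A (E (- P) x)) (E (- P) x) \<le> - e * inner (E (- P) x) (E (- P) x)"
    using P P' by (simp_all add: measure_nu inner_E_self)
  moreover have "x = E P x + E (- P) x" using E_compl[OF P] by simp
  ultimately show ?thesis
    using indefinite_decomposition_bounded_below[OF selfadjoint_add[OF sa xp(1) xn(1)]
        selfadjoint_symmetric[OF sa xn(1) xp(1)] E_orthogonal_compl[OF P]]
    by (simp add: inner_commute)
qed

lemma band_integrable: "integrable (nu z) (\<lambda>\<mu>. indicator {-e<..<e} \<mu> * \<mu>)"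
proof (rule Bochner_Integration.integrable_bound)
  interpret finite_measure "nu z" by (rule finite_measure_nu)
  show "integrable (nu z) (\<lambda>\<mu>. e * indicator {-e<..<e} \<mu>)"
    by (intro integrable_mult_right integrable_real_indicator) (simp_all add: emeasure_nu)
  show "(\<lambda>\<mu>. indicator {-e<..<e} \<mu> * \<mu>) \<in> borel_measurable (nu z)"
    by (intro measurable_nu borel_measurable_times borel_measurable_indicator) auto
  show "AE \<mu> in nu z. norm (indicator {-e<..<e} \<mu> * \<mu>) \<le> norm (e * indicator {-e<..<e} \<mu>)"
    by (intro AE_I2) (auto simp: indicator_def)
qed

lemma band_integral_bound:
  assumes e: "e \<ge> 0"
  shows "\<bar>integral\<^sup>L (nu z) (\<lambda>\<mu>. indicator {-e<..<e} \<mu> * \<mu>)\<bar> \<le> e * inner z z"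
proof -
  interpret finite_measure "nu z" by (rule finite_measure_nu)
  define S :: "real set" where "S = {-e<..<e}"
  have S: "S \<in> sets borel" unfolding S_def by simp
  have int: "integrable (nu z) (\<lambda>\<mu>. indicator S \<mu> * \<mu>)" unfolding S_def by (rule band_integrable)
  have intS: "integrable (nu z) (\<lambda>\<mu>. c * indicator S \<mu>)" for c :: real
    using S by (intro integrable_mult_right integrable_real_indicator) (simp_all add: emeasure_nu)
  have "integral\<^sup>L (nu z) (\<lambda>\<mu>. indicator S \<mu> * \<mu>) \<le> integral\<^sup>L (nu z) (\<lambda>\<mu>. e * indicator S \<mu>)"
    by (rule integral_mono[OF int intS]) (auto simp: S_def indicator_def)
  moreover have "integral\<^sup>L (nu z) (\<lambda>\<mu>. - e * indicator S \<mu>) \<le> integral\<^sup>L (nu z) (\<lambda>\<mu>. indicator S \<mu> * \<mu>)"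
    by (rule integral_mono[OF intS int]) (auto simp: S_def indicator_def)
  moreover have "e * measure (nu z) S \<le> e * inner z z"
    using measure_nu[OF S] inner_E_le[OF S] e by (simp add: mult_left_mono)
  ultimately show ?thesis using S unfolding S_def by (simp add: abs_le_iff)
qed

lemma band_vector_form:
  assumes e: "e \<ge> 0"
  shows "E {-e<..<e} y \<in> form_dom E"
    and "\<bar>sform E (E {-e<..<e} y)\<bar> \<le> e * inner (E {-e<..<e} y) (E {-e<..<e} y)"
proof -
  define S :: "real set" where "S = {-e<..<e}"
  have S: "S \<in> sets borel" unfolding S_def by simp
  show "E {-e<..<e} y \<in> form_dom E"
    using band_integrable[of y e] integrable_nu_E[OF S, of "\<lambda>\<mu>. \<mu>" y]
    unfolding S_def form_dom_def by simp
  \<comment> \<open>E S y is fixed by E S, so its spectral measure lives on the band S.\<close>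
  have "sform E (E S y) = integral\<^sup>L (nu (E S (E S y))) (\<lambda>\<mu>. \<mu>)"
    unfolding sform_def by (simp add: E_idem[OF S])
  also have "\<dots> = integral\<^sup>L (nu (E S y)) (\<lambda>\<mu>. indicator S \<mu> * \<mu>)"
    by (rule integral_nu_E[OF S]) simp
  finally show "\<bar>sform E (E {-e<..<e} y)\<bar> \<le> e * inner (E {-e<..<e} y) (E {-e<..<e} y)"
    using band_integral_bound[OF e, of "E S y"] unfolding S_def by simp
qed

lemma sform_band_perturbation:
  assumes e: "e \<ge> 0" and m: "m \<in> form_dom E"
    and outside: "E (- {-e<..<e}) z = E (- {-e<..<e}) m"
  shows "z \<in> form_dom E"
    and "sform E m - e * inner z z - e * inner m m \<le> sform E z"
proof -
  define S :: "real set" where "S = {-e<..<e}"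
  have S: "S \<in> sets borel" and S': "- S \<in> sets borel" unfolding S_def by auto
  have outside': "E (- S) z = E (- S) m" using outside unfolding S_def .
  have mint: "integrable (nu m) (\<lambda>\<mu>. \<mu>)" using m unfolding form_dom_def by simp
  have iSz: "integrable (nu z) (\<lambda>\<mu>. indicator S \<mu> * \<mu>)"
    and iSm: "integrable (nu m) (\<lambda>\<mu>. indicator S \<mu> * \<mu>)"
    unfolding S_def by (rule band_integrable)+
  have iNm: "integrable (nu m) (\<lambda>\<mu>. indicator (- S) \<mu> * \<mu>)"
    using integrable_mult_indicator[OF _ mint, of "- S"] S' by simp
  then have "integrable (nu (E (- S) z)) (\<lambda>\<mu>. \<mu>)"
    using integrable_nu_E[OF S', of "\<lambda>\<mu>. \<mu>" m] outside' by simp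
  then have iNz: "integrable (nu z) (\<lambda>\<mu>. indicator (- S) \<mu> * \<mu>)"
    using integrable_nu_E[OF S', of "\<lambda>\<mu>. \<mu>" z] by simp
  have split: "(\<lambda>\<mu>::real. \<mu>) = (\<lambda>\<mu>. indicator S \<mu> * \<mu> + indicator (- S) \<mu> * \<mu>)"
    by (auto simp: indicator_def fun_eq_iff)
  show "z \<in> form_dom E"
    unfolding form_dom_def by (subst split) (simp add: iSz iNz)
  have "sform E z = integral\<^sup>L (nu z) (\<lambda>\<mu>. indicator S \<mu> * \<mu>) + integral\<^sup>L (nu z) (\<lambda>\<mu>. indicator (- S) \<mu> * \<mu>)"
    unfolding sform_def by (subst split) (rule Bochner_Integration.integral_add[OF iSz iNz])
  moreover have "sform E m = integral\<^sup>L (nu m) (\<lambda>\<mu>. indicator S \<mu> * \<mu>) + integral\<^sup>L (nu m) (\<lambda>\<mu>. indicator (- S) \<mu> * \<mu>)"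
    unfolding sform_def by (subst split) (rule Bochner_Integration.integral_add[OF iSm iNm])
  moreover have "integral\<^sup>L (nu z) (\<lambda>\<mu>. indicator (- S) \<mu> * \<mu>) = integral\<^sup>L (nu m) (\<lambda>\<mu>. indicator (- S) \<mu> * \<mu>)"
    using integral_nu_E[OF S', of "\<lambda>\<mu>. \<mu>" z] integral_nu_E[OF S', of "\<lambda>\<mu>. \<mu>" m] outside'
    by simp
  ultimately show "sform E m - e * inner z z - e * inner m m \<le> sform E z"
    using band_integral_bound[OF e, of z] band_integral_bound[OF e, of m]
    unfolding S_def by (simp add: abs_le_iff)
qed

end

lemma zero_in_spectrum_band_nonzero:
  fixes A :: "'h::{real_inner,complete_space} \<Rightarrow> 'h"
  assumes sa: "selfadjoint J D A" and sm: "spectral_measure_of J D A E"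
    and spec: "zero_in_spectrum D A" and e: "e > 0"
  shows "\<exists>y. E {-e<..<e} y \<noteq> 0"
proof (rule ccontr)
  interpret proj_valued_measure E by (rule spectral_measure_of_imp_pvm[OF sm])
  assume "\<nexists>y. E {-e<..<e} y \<noteq> 0"
  then have "\<forall>x\<in>D. e * norm x \<le> norm (A x)" using spectral_gap_bounded_below[OF sa sm] by auto
  then show False using bounded_below_zero_notin_spectrum[OF sa e] spec by blast
qed

section \<open>Enlarging a subspace by a spectral vector\<close>

definition complex_extend :: "('h::real_vector \<Rightarrow> 'h) \<Rightarrow> 'h set \<Rightarrow> 'h \<Rightarrow> 'h set" where
  "complex_extend J M x = {m + \<alpha> *\<^sub>R x + \<beta> *\<^sub>R J x | m \<alpha> \<beta>. m \<in> M}"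

lemma complex_subspace_extend:
  assumes J: "complex_structure J" and M: "complex_subspace J M"
  shows "complex_subspace J (complex_extend J M x)"
proof -
  have lin: "linear J" and JJ: "\<And>u. J (J u) = - u" using J unfolding complex_structure_def by auto
  have sub: "subspace M" and JM: "\<And>m. m \<in> M \<Longrightarrow> J m \<in> M"
    using M unfolding complex_subspace_def by auto
  have "subspace (complex_extend J M x)"
    unfolding subspace_def complex_extend_def
  proof (intro conjI ballI allI)
    have "0 = 0 + 0 *\<^sub>R x + 0 *\<^sub>R J x" by simp
    then show "0 \<in> {m + \<alpha> *\<^sub>R x + \<beta> *\<^sub>R J x | m \<alpha> \<beta>. m \<in> M}"
      using subspace_0[OF sub] by blast
    fix u v c
    assume "u \<in> {m + \<alpha> *\<^sub>R x + \<beta> *\<^sub>R J x | m \<alpha> \<beta>. m \<in> M}"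
      and "v \<in> {m + \<alpha> *\<^sub>R x + \<beta> *\<^sub>R J x | m \<alpha> \<beta>. m \<in> M}"
    then obtain m1 a1 b1 m2 a2 b2 where m: "m1 \<in> M" "m2 \<in> M"
      and u: "u = m1 + a1 *\<^sub>R x + b1 *\<^sub>R J x" and v: "v = m2 + a2 *\<^sub>R x + b2 *\<^sub>R J x"
      by blast
    have "u + v = (m1 + m2) + (a1 + a2) *\<^sub>R x + (b1 + b2) *\<^sub>R J x"
      unfolding u v by (simp add: algebra_simps)
    then show "u + v \<in> {m + \<alpha> *\<^sub>R x + \<beta> *\<^sub>R J x | m \<alpha> \<beta>. m \<in> M}"
      using subspace_add[OF sub m] by blast
    have "c *\<^sub>R u = c *\<^sub>R m1 + (c * a1) *\<^sub>R x + (c * b1) *\<^sub>R J x"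
      unfolding u by (simp add: algebra_simps)
    then show "c *\<^sub>R u \<in> {m + \<alpha> *\<^sub>R x + \<beta> *\<^sub>R J x | m \<alpha> \<beta>. m \<in> M}"
      using subspace_scale[OF sub m(1)] by blast
  qed
  moreover have "J u \<in> complex_extend J M x" if u: "u \<in> complex_extend J M x" for u
  proof -
    obtain m a b where m: "m \<in> M" and u: "u = m + a *\<^sub>R x + b *\<^sub>R J x"
      using u unfolding complex_extend_def by blast
    have "J u = J m + (- b) *\<^sub>R x + a *\<^sub>R J x"
      unfolding u using lin JJ by (simp add: linear_add linear_scale algebra_simps)
    then show ?thesis using JM[OF m] unfolding complex_extend_def by blast
  qed
  ultimately show ?thesis unfolding complex_subspace_def by blast
qed

lemma complex_extend_psubset:
  assumes "subspace M" "x \<notin> M"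
  shows "M \<subset> complex_extend J M x"
proof -
  have "m = m + 0 *\<^sub>R x + 0 *\<^sub>R J x" "x = 0 + 1 *\<^sub>R x + 0 *\<^sub>R J x" for m by simp_all
  then have "M \<subseteq> complex_extend J M x" "x \<in> complex_extend J M x"
    using subspace_0[OF assms(1)] unfolding complex_extend_def by blast+
  then show ?thesis using assms(2) by blast
qed

lemma E_compl_add_range:
  assumes J: "complex_structure J" and sm: "spectral_measure_of J D A E" and S: "S \<in> sets borel"
  shows "E (- S) (m + \<alpha> *\<^sub>R E S y + \<beta> *\<^sub>R J (E S y)) = E (- S) m"
proof -
  interpret proj_valued_measure E by (rule spectral_measure_of_imp_pvm[OF sm])
  have S': "- S \<in> sets borel" using S by auto
  have "E (- S) (E S y) = 0" using E_Int[OF S' S, of y] by (simp add: E_empty)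
  moreover have "E (- S) (J (E S y)) = J (E (- S) (E S y))"
    by (rule spectral_measure_of_commute[OF sm S'])
  moreover have "linear J" "linear (E (- S))"
    using J E_linear[OF S'] unfolding complex_structure_def by (auto intro: bounded_linear.linear)
  ultimately show ?thesis by (simp add: linear_add linear_scale linear_0)
qed

lemma zero_in_spectrum_form_extension:
  fixes J A :: "'h::{real_inner,complete_space} \<Rightarrow> 'h"
  assumes J: "complex_structure J" and sa: "selfadjoint J D A" and sm: "spectral_measure_of J D A E"
    and spec: "zero_in_spectrum D A"
    and M: "complex_subspace J M" "M \<subseteq> form_dom E"
    and M_pos: "\<forall>m\<in>M. a * (norm m)\<^sup>2 \<le> sform E m"
    and e: "0 < e" "e < a"
  shows "\<exists>M'. complex_subspace J M' \<and> M \<subset> M' \<and> M' \<subseteq> form_dom E \<and>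
      (\<forall>z\<in>M'. - e * (norm z)\<^sup>2 \<le> sform E z)"
proof -
  interpret proj_valued_measure E by (rule spectral_measure_of_imp_pvm[OF sm])
  define S :: "real set" where "S = {-e<..<e}"
  have S: "S \<in> sets borel" unfolding S_def by auto
  obtain y where "E S y \<noteq> 0"
    using zero_in_spectrum_band_nonzero[OF sa sm spec e(1)] unfolding S_def by blast
  define x where "x = E S y"
  have "x \<noteq> 0" using \<open>E S y \<noteq> 0\<close> unfolding x_def .
  have x_small: "\<bar>sform E x\<bar> \<le> e * (norm x)\<^sup>2"
    using band_vector_form(2)[of e y] e unfolding x_def S_def by (simp add: power2_norm_eq_inner)
  have "x \<notin> M"
  proof
    assume "x \<in> M"
    then have "a * (norm x)\<^sup>2 \<le> e * (norm x)\<^sup>2" using M_pos x_small by fastforce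
    then show False using e \<open>x \<noteq> 0\<close> by simp
  qed
  note outside = E_compl_add_range[OF J sm S, where y = y, folded x_def]
  have near_nonneg: "z \<in> form_dom E \<and> - e * (norm z)\<^sup>2 \<le> sform E z"
    if z: "z \<in> complex_extend J M x" for z
  proof -
    obtain m \<alpha> \<beta> where m: "m \<in> M" and z: "z = m + \<alpha> *\<^sub>R x + \<beta> *\<^sub>R J x"
      using z unfolding complex_extend_def by blast
    have mD: "m \<in> form_dom E" using m M(2) by blast
    note pert = sform_band_perturbation[of e m z, OF _ mD outside[of m \<alpha> \<beta>, folded z, unfolded S_def]]
    have "e * (norm m)\<^sup>2 \<le> sform E m"
      using M_pos m e by (smt (verit) mult_right_mono zero_le_power2)
    then show ?thesis using pert e by (simp add: power2_norm_eq_inner)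
  qed
  show ?thesis
  proof (intro exI conjI ballI)
    show "complex_subspace J (complex_extend J M x)" by (rule complex_subspace_extend[OF J M(1)])
    show "M \<subset> complex_extend J M x"
      using M(1) \<open>x \<notin> M\<close> by (intro complex_extend_psubset) (simp_all add: complex_subspace_def)
  qed (use near_nonneg in blast)+
qed

section \<open>Sign changes of a steeply decreasing function\<close>

lemma derivative_le_imp_decrease:
  fixes g g' :: "real \<Rightarrow> real"
  assumes ab: "a < b" and sub: "{a..b} \<subseteq> \<Delta>"
    and der: "\<forall>l\<in>\<Delta>. (g has_real_derivative g' l) (at l within \<Delta>)"
    and bound: "\<forall>l. a < l \<and> l < b \<longrightarrow> g' l \<le> - d"
  shows "g b \<le> g a - d * (b - a)"
proof -
  have "\<exists>l\<in>{a<..<b}. g b - g a = (\<lambda>h. g' l * h) (b - a)"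
  proof (rule mvt_simple[OF ab])
    fix l assume "a \<le> l" "l \<le> b"
    then have "l \<in> \<Delta>" using sub by auto
    then have "(g has_real_derivative g' l) (at l within \<Delta>)" using der by blast
    then have "(g has_real_derivative g' l) (at l within {a..b})" using sub by (rule DERIV_subset)
    then show "(g has_derivative (\<lambda>h. g' l * h)) (at l within {a..b})"
      by (simp add: has_field_derivative_def)
  qed
  then obtain l where l: "a < l" "l < b" "g b - g a = g' l * (b - a)" by auto
  have "g' l \<le> - d" using bound l by simp
  then have "g' l * (b - a) \<le> - d * (b - a)" using ab by (intro mult_right_mono) auto
  then show ?thesis using l by (simp add: algebra_simps)
qed

lemma simple_zeros_nonpos_right:
  fixes g :: "real \<Rightarrow> real"
  assumes \<Delta>: "is_interval \<Delta>" "\<mu> \<in> \<Delta>" "l \<in> \<Delta>" "\<mu> \<le> l"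
    and cont: "continuous_on \<Delta> g"
    and cross: "\<forall>l0\<in>\<Delta>. g l0 = 0 \<longrightarrow> (\<forall>l\<in>\<Delta>. (l < l0 \<longrightarrow> g l > 0) \<and> (l > l0 \<longrightarrow> g l < 0))"
    and g\<mu>: "g \<mu> \<le> 0"
  shows "g l \<le> 0"
proof (rule ccontr)
  assume "\<not> g l \<le> 0"
  then have gl: "g l > 0" by simp
  have sub: "{\<mu>..l} \<subseteq> \<Delta>" using mem_is_interval_1_I[OF \<Delta>(1-3)] by auto
  have "\<exists>l0. \<mu> \<le> l0 \<and> l0 \<le> l \<and> g l0 = 0"
    using IVT'[OF g\<mu> less_imp_le[OF gl] \<Delta>(4) continuous_on_subset[OF cont sub]] .
  then obtain l0 where l0: "\<mu> \<le> l0" "l0 \<le> l" "g l0 = 0" by blast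
  have "l0 \<in> \<Delta>" using sub l0 by auto
  have "l0 \<noteq> l" using l0 gl by auto
  show False
  proof (cases "\<mu> < l0")
    case True
    then have "g \<mu> > 0" using cross[rule_format, OF \<open>l0 \<in> \<Delta>\<close> l0(3) \<Delta>(2)] by simp
    then show False using g\<mu> by simp
  next
    case False
    then have "l0 < l" using l0 \<open>l0 \<noteq> l\<close> by simp
    then have "g l < 0" using cross[rule_format, OF \<open>l0 \<in> \<Delta>\<close> l0(3) \<Delta>(3)] by simp
    then show False using gl by simp
  qed
qed

lemma steep_crossing_pos_left:
  fixes g g' :: "real \<Rightarrow> real"
  assumes \<Delta>: "is_interval \<Delta>" "\<mu>1 \<in> \<Delta>" "\<mu>2 \<in> \<Delta>" "\<mu>1 < \<mu>2"
    and cont: "continuous_on \<Delta> g"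
    and der: "\<forall>l\<in>\<Delta>. (g has_real_derivative g' l) (at l within \<Delta>)"
    and cross: "\<forall>l0\<in>\<Delta>. g l0 = 0 \<longrightarrow> (\<forall>l\<in>\<Delta>. (l < l0 \<longrightarrow> g l > 0) \<and> (l > l0 \<longrightarrow> g l < 0))"
    and steep: "\<forall>l\<in>{\<mu>1..\<mu>2}. \<bar>g l\<bar> \<le> \<epsilon> \<longrightarrow> g' l \<le> - \<delta>" and \<delta>: "\<delta> > 0"
    and g\<mu>2: "g \<mu>2 \<ge> - e" and e: "e < \<epsilon>" "e < \<delta> * (\<mu>2 - \<mu>1)"
  shows "g \<mu>1 > 0"
proof (rule ccontr)
  assume "\<not> g \<mu>1 > 0"
  have I: "{\<mu>1..\<mu>2} \<subseteq> \<Delta>" using mem_is_interval_1_I[OF \<Delta>(1-3)] by auto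
  have nonpos: "g l \<le> 0" if "l \<in> {\<mu>1..\<mu>2}" for l
    using simple_zeros_nonpos_right[OF \<Delta>(1,2) _ _ cont cross] \<open>\<not> g \<mu>1 > 0\<close> I that by auto
  \<comment> \<open>Where -\<epsilon> < g \<le> 0, (VM) makes g decrease at rate at least \<delta>.\<close>
  have descent: "g \<mu>2 \<le> g l0 - \<delta> * (\<mu>2 - l0)"
    if l0: "l0 \<in> {\<mu>1..\<mu>2}" "l0 < \<mu>2" and above: "\<forall>l. l0 < l \<and> l < \<mu>2 \<longrightarrow> g l > - \<epsilon>" for l0
  proof (rule derivative_le_imp_decrease[OF l0(2) _ der])
    show "{l0..\<mu>2} \<subseteq> \<Delta>" using I l0 by auto
    show "\<forall>l. l0 < l \<and> l < \<mu>2 \<longrightarrow> g' l \<le> - \<delta>"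
      using steep above nonpos l0 by (smt (verit) atLeastAtMost_iff)
  qed
  \<comment> \<open>After the last point of [\<mu>1, \<mu>2] where g \<le> -\<epsilon> (or after \<mu>1 if there is none),
    g descends steeply all the way to \<mu>2.\<close>
  define C where "C = {\<mu>1..\<mu>2} \<inter> g -` {..- \<epsilon>}"
  show False
  proof (cases "C = {}")
    case True
    have "g l > - \<epsilon>" if "\<mu>1 < l" "l < \<mu>2" for l
    proof (rule ccontr)
      assume "\<not> g l > - \<epsilon>"
      then have "l \<in> C" using that unfolding C_def by auto
      then show False using True by simp
    qed
    then have "g \<mu>2 \<le> g \<mu>1 - \<delta> * (\<mu>2 - \<mu>1)"
      using \<Delta>(4) by (intro descent) auto
    then show False using \<open>\<not> g \<mu>1 > 0\<close> g\<mu>2 e by simp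
  next
    case False
    have "closed C"
      unfolding C_def using continuous_closed_preimage[OF continuous_on_subset[OF cont I]] by simp
    moreover have "bdd_above C" unfolding C_def by (rule bdd_aboveI[of _ \<mu>2]) auto
    ultimately have "Sup C \<in> C" using False closed_contains_Sup by blast
    then have l0: "Sup C \<in> {\<mu>1..\<mu>2}" "g (Sup C) \<le> - \<epsilon>" unfolding C_def by auto
    then have "Sup C < \<mu>2" using g\<mu>2 e by (cases "Sup C = \<mu>2") auto
    moreover have "g l > - \<epsilon>" if "Sup C < l" "l < \<mu>2" for l
      using that l0 cSup_upper[OF _ \<open>bdd_above C\<close>, of l] unfolding C_def by fastforce
    ultimately have "g \<mu>2 \<le> g (Sup C) - \<delta> * (\<mu>2 - Sup C)" using l0 by (intro descent) auto
    then show False using l0 g\<mu>2 e \<delta> \<open>Sup C < \<mu>2\<close> by (smt (verit) mult_pos_pos)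
  qed
qed

theorem lemma2p9:
  fixes J :: "'h::{real_inner,complete_space} \<Rightarrow> 'h"
    and \<Delta> :: "real set"
    and Dom :: "real \<Rightarrow> 'h set"
    and T :: "real \<Rightarrow> 'h \<Rightarrow> 'h"
    and E :: "real \<Rightarrow> real set \<Rightarrow> 'h \<Rightarrow> 'h"
    and \<D> :: "'h set"
    and t' :: "real \<Rightarrow> 'h \<Rightarrow> real"
    and a \<mu>1 \<mu>2 :: real
    and M :: "'h set"
  assumes cplx: "complex_structure J"
    and interval: "is_interval \<Delta>"
    and A1: "\<forall>l\<in>\<Delta>. selfadjoint J (Dom l) (T l) \<and> spectral_measure_of J (Dom l) (T l) (E l)"
    and A2: "\<forall>l\<in>\<Delta>. form_dom (E l) = \<D>"
    and A3: "\<forall>x\<in>\<D> - {0}. continuous_on \<Delta> (\<lambda>l. sform (E l) x) \<and>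
               (\<forall>l0\<in>\<Delta>. sform (E l0) x = 0 \<longrightarrow>
                  (\<forall>l\<in>\<Delta>. (l < l0 \<longrightarrow> sform (E l) x > 0) \<and> (l > l0 \<longrightarrow> sform (E l) x < 0)))"
    and VM_diff: "\<forall>u\<in>\<D>. \<forall>l\<in>\<Delta>. ((\<lambda>s. sform (E s) u) has_real_derivative t' l u) (at l within \<Delta>)"
    and VM_bound: "\<forall>\<alpha> \<beta>. {\<alpha>..\<beta>} \<subseteq> \<Delta> \<longrightarrow>
               (\<exists>\<epsilon>>0. \<exists>\<delta>>0. \<forall>x\<in>\<D>. \<forall>l\<in>{\<alpha>..\<beta>}.
                  norm x = 1 \<longrightarrow> \<bar>sform (E l) x\<bar> \<le> \<epsilon> \<longrightarrow> t' l x \<le> - \<delta>)"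
    and a_pos: "a > 0"
    and mu1: "\<mu>1 \<in> \<Delta>" and mu2: "\<mu>2 \<in> \<Delta>" and mu12: "\<mu>1 < \<mu>2"
    and M_sub: "complex_subspace J M" and M_D: "M \<subseteq> \<D>"
    and spec: "\<mu>2 \<in> opfun_spectrum \<Delta> Dom T"
    and M_pos: "\<forall>x\<in>M. sform (E \<mu>2) x \<ge> a * (norm x)\<^sup>2"
  shows "\<exists>M'. complex_subspace J M' \<and> M \<subset> M' \<and> M' \<subseteq> \<D> \<and>
               (\<forall>x\<in>M' - {0}. sform (E \<mu>1) x > 0)"
proof -
  have "{\<mu>1..\<mu>2} \<subseteq> \<Delta>" using mem_is_interval_1_I[OF interval mu1 mu2] by auto
  then obtain \<epsilon> \<delta> where \<epsilon>: "\<epsilon> > 0" and \<delta>: "\<delta> > 0" and steep: "\<forall>x\<in>\<D>. \<forall>l\<in>{\<mu>1..\<mu>2}.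
      norm x = 1 \<longrightarrow> \<bar>sform (E l) x\<bar> \<le> \<epsilon> \<longrightarrow> t' l x \<le> - \<delta>"
    using VM_bound by blast
  define e where "e = min a (min \<epsilon> (\<delta> * (\<mu>2 - \<mu>1))) / 2"
  have e: "0 < e" "e < a" "e < \<epsilon>" "e < \<delta> * (\<mu>2 - \<mu>1)"
    using a_pos \<epsilon> \<delta> mu12 by (auto simp: e_def min_def)
  have "selfadjoint J (Dom \<mu>2) (T \<mu>2)" "spectral_measure_of J (Dom \<mu>2) (T \<mu>2) (E \<mu>2)"
    "zero_in_spectrum (Dom \<mu>2) (T \<mu>2)" "form_dom (E \<mu>2) = \<D>"
    using A1 A2 mu2 spec unfolding opfun_spectrum_def by auto
  then obtain M' where M': "complex_subspace J M'" "M \<subset> M'" "M' \<subseteq> \<D>"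
    and near: "\<forall>z\<in>M'. - e * (norm z)\<^sup>2 \<le> sform (E \<mu>2) z"
    using zero_in_spectrum_form_extension[OF cplx _ _ _ M_sub _ M_pos e(1,2)] M_D by metis
  interpret P1: proj_valued_measure "E \<mu>1" using A1 mu1 spectral_measure_of_imp_pvm by blast
  have "sform (E \<mu>1) z > 0" if z: "z \<in> M'" "z \<noteq> 0" for z
  proof -
    define w where "w = z /\<^sub>R norm z"
    have w: "w \<in> M'" "norm w = 1"
      using M'(1) z unfolding w_def complex_subspace_def by (auto intro: subspace_scale)
    then have "w \<in> \<D> - {0}" using M'(3) by auto
    then have "sform (E \<mu>1) w > 0"
      using steep_crossing_pos_left[OF interval mu1 mu2 mu12, of "\<lambda>l. sform (E l) w" "\<lambda>l. t' l w"
          \<epsilon> \<delta> e] A3 VM_diff steep near w e \<delta> by auto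
    then show ?thesis using P1.sform_normalize[OF z(2)] z(2) unfolding w_def by simp
  qed
  then show ?thesis using M' by blast
qed

end
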